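(* Let $\ell$ be a positive integer and let $r_i=(a_i,b_i,c_i,d_i)\in\mathbb{Z}^4$, $i=1,2,3,4$, satisfy $a_ia_j+b_ib_j+c_ic_j+d_id_j=\delta_{ij}\ell$ for all $i,j\in\{1,2,3,4\}$. Let $D_i=\gcd(a_i,b_i,c_i,d_i)$ and assume $\gcd(D_1,D_2,D_3,D_4)=1$. For $1\le i<j\le 4$ let $\zeta_{ij}$ be the greatest common divisor of all $2\times2$ minors of the matrix $\begin{pmatrix} a_i & b_i & c_i & d_i\\ a_j & b_j & c_j & d_j\end{pmatrix}$. Let $H=\{\sum_{i=1}^4 s_ir_i: s_i\in[0,1]\}$ and write its Ehrhart polynomial as $E_{H}(t)=\ell^2t^4+\alpha_1t^3+\alpha_2t^2+\alpha_3t+1$. Then $$\alpha_2=\alpha_3+\delta-\Delta,$$ where $\delta=\sum_{1\le i<j\le 4}\zeta_{ij}$ and $\Delta=D_1+D_2+D_3+D_4$.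
   Context: $\delta_{ij}$ is the Kronecker delta. The Ehrhart polynomial $E_H$ is the polynomial with $E_H(t)=\#(tH\cap\mathbb{Z}^4)$ for all positive integers $t$. *)

theory Defs
  imports Complex_Main
begin

definition par_H :: "(nat \<Rightarrow> int) \<Rightarrow> (nat \<Rightarrow> int) \<Rightarrow> (nat \<Rightarrow> int) \<Rightarrow> (nat \<Rightarrow> int)
    \<Rightarrow> (real \<times> real \<times> real \<times> real) set" where
  "par_H a b c d = {(\<Sum>i=1..4. s i * a i, \<Sum>i=1..4. s i * b i,
                     \<Sum>i=1..4. s i * c i, \<Sum>i=1..4. s i * d i) | s.
                     \<forall>i\<in>{1..4::nat}. 0 \<le> s i \<and> s i \<le> (1::real)}"

definition lattice_count :: "(nat \<Rightarrow> int) \<Rightarrow> (nat \<Rightarrow> int) \<Rightarrow> (nat \<Rightarrow> int) \<Rightarrow> (nat \<Rightarrow> int)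
    \<Rightarrow> nat \<Rightarrow> nat" where
  "lattice_count a b c d t = card {(x::int, y::int, z::int, w::int).
      (real_of_int x, real_of_int y, real_of_int z, real_of_int w)
        \<in> (\<lambda>(p, q, u, v). (real t * p, real t * q, real t * u, real t * v)) ` par_H a b c d}"

definition zeta :: "(nat \<Rightarrow> int) \<Rightarrow> (nat \<Rightarrow> int) \<Rightarrow> (nat \<Rightarrow> int) \<Rightarrow> (nat \<Rightarrow> int)
    \<Rightarrow> nat \<Rightarrow> nat \<Rightarrow> int" where
  "zeta a b c d i j = Gcd {a i * b j - b i * a j, a i * c j - c i * a j, a i * d j - d i * a j,
                          b i * c j - c i * b j, b i * d j - d i * b j, c i * d j - d i * c j}"

end

theory Submission
  imports Defs "HOL-Analysis.Analysis"
begin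

text \<open>Since the rows r_i are pairwise orthogonal of squared length l, every integer point satisfies
  l x = sum_i <x, r_i> r_i. Hence x \<mapsto> (<x, r_i>)_i identifies the integer points of tH with the
  points y of the cube [0, tl]^4 for which l divides sum_i y_i r_i. That condition is l-periodic in
  each y_i, so summing over the cube makes the count a polynomial in t whose coefficient of t^k counts
  the solutions in [0, l)^4 supported on k given coordinates. On one coordinate i there are D_i of
  them, on two coordinates i, j there are zeta_ij, and comparing coefficients gives
  alpha_3 = Delta and alpha_2 = delta.\<close>

lemma dvd_mult_Gcd_iff:
  fixes k u :: int
  shows "(\<forall>a\<in>A. k dvd u * a) \<longleftrightarrow> k dvd u * Gcd A"
proof -
  have "(\<forall>a\<in>A. k dvd u * a) \<longleftrightarrow> k dvd Gcd ((*) u ` A)" by (simp add: dvd_Gcd_iff)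
  then show ?thesis by (simp add: Gcd_mult)
qed

lemma Gcd_image_linear_combination:
  fixes x :: "'k \<Rightarrow> int"
  assumes "finite K"
  obtains s where "(\<Sum>k\<in>K. s k * x k) = Gcd (x ` K)"
proof -
  from assms have "\<exists>s. (\<Sum>k\<in>K. s k * x k) = Gcd (x ` K)"
  proof (induction K rule: finite_induct)
    case empty
    then show ?case by simp
  next
    case (insert k K)
    then obtain s where s: "(\<Sum>j\<in>K. s j * x j) = Gcd (x ` K)" by blast
    obtain p q where pq: "p * x k + q * Gcd (x ` K) = gcd (x k) (Gcd (x ` K))"
      using bezout_int by blast
    have "(\<Sum>j\<in>insert k K. ((\<lambda>j. q * s j)(k := p)) j * x j) = p * x k + q * (\<Sum>j\<in>K. s j * x j)"
      using insert.hyps by (auto simp: sum_distrib_left mult.assoc intro!: sum.cong)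
    then show ?case using pq s by (metis Gcd_insert image_insert)
  qed
  with that show ?thesis by blast
qed

lemma periodic_add_mult:
  assumes "\<And>u. g (u + m) = g (u::int)"
  shows "g (u + int n * m) = g u"
proof (induction n)
  case (Suc n)
  then show ?case using assms[of "u + int n * m"] by (simp add: algebra_simps)
qed simp

lemma sum_periodic:
  fixes g :: "int \<Rightarrow> 'a::comm_ring_1"
  assumes "m > 0" and periodic: "\<And>u. g (u + m) = g u"
  shows "(\<Sum>u\<in>{0..<int n * m}. g u) = of_nat n * (\<Sum>u\<in>{0..<m}. g u)"
proof (induction n)
  case (Suc n)
  have nonneg: "0 \<le> m * int n" using \<open>m > 0\<close> by simp
  have "{0..<int (Suc n) * m} = {0..<int n * m} \<union> (\<lambda>u. u + int n * m) ` {0..<m}"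
    by (auto simp: algebra_simps image_iff intro!: exI[of _ "_ - int n * m"])
      (use nonneg \<open>m > 0\<close> in linarith)+
  moreover have "{0..<int n * m} \<inter> (\<lambda>u. u + int n * m) ` {0..<m} = {}" by auto
  moreover have "(\<Sum>u\<in>(\<lambda>u. u + int n * m) ` {0..<m}. g u) = (\<Sum>u\<in>{0..<m}. g (u + int n * m))"
    by (subst sum.reindex) (auto simp: inj_on_def)
  ultimately have "(\<Sum>u\<in>{0..<int (Suc n) * m}. g u)
      = (\<Sum>u\<in>{0..<int n * m}. g u) + (\<Sum>u\<in>{0..<m}. g (u + int n * m))"
    by (simp only: sum.union_disjoint finite_atLeastLessThan_int finite_imageI)
  then show ?case
    using Suc.IH periodic_add_mult[of g m, OF periodic] by (simp add: algebra_simps)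
qed simp

lemma sum_periodic_atLeastAtMost:
  fixes g :: "int \<Rightarrow> 'a::comm_ring_1"
  assumes "m > 0" and periodic: "\<And>u. g (u + m) = g u"
  shows "(\<Sum>u\<in>{0..int n * m}. g u) = of_nat n * (\<Sum>u\<in>{0..<m}. g u) + g 0"
proof -
  have "{0..int n * m} = insert (int n * m) {0..<int n * m}" using assms(1) by auto
  then show ?thesis
    using sum_periodic[of m g n] periodic_add_mult[of g m 0 n] assms by simp
qed

lemma sum_of_bool_dvd_diff:
  fixes m n u0 :: int
  assumes "m > 0" and "n \<ge> 0"
  shows "(\<Sum>u\<in>{0..<m * n}. of_bool (m dvd u - u0)) = n"
proof -
  have "{u \<in> {0..<m}. m dvd u - u0} = {u0 mod m}"
    using assms(1) by (auto simp: mod_eq_dvd_iff[symmetric])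
  then have one: "(\<Sum>u\<in>{0..<m}. of_bool (m dvd u - u0)) = (1::int)"
    by (simp add: sum.If_cases Int_def)
  have periodic: "of_bool (m dvd (u + m) - u0) = (of_bool (m dvd u - u0) :: int)" for u
    using dvd_add_times_triv_right_iff[of m "u - u0" 1] by (simp add: algebra_simps)
  have "(\<Sum>u\<in>{0..<int (nat n) * m}. of_bool (m dvd u - u0))
      = of_nat (nat n) * (\<Sum>u\<in>{0..<m}. of_bool (m dvd u - u0) :: int)"
    by (rule sum_periodic[OF assms(1)]) (fact periodic)
  with one assms(2) show ?thesis by (simp only: mult_1_left of_nat_nat of_int_eq_id id_apply mult.commute)
qed

lemma sum_of_bool_dvd_affine:
  fixes x c :: "'k \<Rightarrow> int"
  assumes "l > 0" and "Gcd (x ` K) dvd l" and solution: "\<forall>k\<in>K. l dvd u0 * x k + c k"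
  shows "(\<Sum>u\<in>{0..<l}. of_bool (\<forall>k\<in>K. l dvd u * x k + c k)) = Gcd (x ` K)"
proof -
  define D where "D = Gcd (x ` K)"
  obtain l' where l': "l = D * l'" using assms(2) unfolding D_def by (elim dvdE)
  have "D \<ge> 0" by (simp add: D_def)
  moreover have "D \<noteq> 0" using l' \<open>l > 0\<close> by auto
  ultimately have "D > 0" by simp
  with l' \<open>l > 0\<close> have "l' > 0" by (simp add: zero_less_mult_iff)
  have "(\<forall>k\<in>K. l dvd u * x k + c k) \<longleftrightarrow> l' dvd u - u0" for u
  proof -
    have "l dvd u * x k + c k \<longleftrightarrow> l dvd (u - u0) * x k" if "k \<in> K" for k
    proof -
      have "u * x k + c k = (u - u0) * x k + (u0 * x k + c k)" by (simp add: algebra_simps)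
      then show ?thesis using solution that by (metis dvd_add_left_iff)
    qed
    then have "(\<forall>k\<in>K. l dvd u * x k + c k) \<longleftrightarrow> (\<forall>a\<in>x ` K. l dvd (u - u0) * a)" by simp
    also have "\<dots> \<longleftrightarrow> l dvd (u - u0) * D" unfolding D_def by (rule dvd_mult_Gcd_iff)
    also have "\<dots> \<longleftrightarrow> l' dvd u - u0" using l' \<open>D > 0\<close> by (simp add: mult.commute)
    finally show ?thesis .
  qed
  then have "(\<Sum>u\<in>{0..<l}. of_bool (\<forall>k\<in>K. l dvd u * x k + c k))
      = (\<Sum>u\<in>{0..<l' * D}. of_bool (l' dvd u - u0) :: int)"
    using l' by (simp add: mult.commute)
  also have "\<dots> = D" using sum_of_bool_dvd_diff \<open>l' > 0\<close> \<open>D > 0\<close> by simp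
  finally show ?thesis by (simp add: D_def)
qed

lemma Gcd_dvd_sum_squares: "Gcd (x ` K) dvd (\<Sum>k\<in>K. x k * x k :: int)"
  by (intro dvd_sum dvd_mult2) simp

lemma sum_of_bool_dvd_mult:
  fixes x :: "'k \<Rightarrow> int"
  assumes "l > 0" and "(\<Sum>k\<in>K. x k * x k) = l"
  shows "(\<Sum>u\<in>{0..<l}. of_bool (\<forall>k\<in>K. l dvd u * x k)) = Gcd (x ` K)"
  using sum_of_bool_dvd_affine[of l x K 0 "\<lambda>_. 0"] Gcd_dvd_sum_squares[of x K] assms by simp

definition minors :: "('k \<Rightarrow> int) \<Rightarrow> ('k \<Rightarrow> int) \<Rightarrow> 'k set \<Rightarrow> int set" where
  "minors x y K = (\<lambda>(p, q). x p * y q - x q * y p) ` (K \<times> K)"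

lemma Gcd_dvd_Gcd_minors: "Gcd (x ` K) dvd Gcd (minors x y K)"
  unfolding minors_def by (auto intro!: Gcd_greatest dvd_diff dvd_mult2)

lemma Gcd_minors_dvd:
  fixes x y :: "'k \<Rightarrow> int"
  assumes "(\<Sum>k\<in>K. y k * y k) = l" and "(\<Sum>k\<in>K. x k * y k) = 0"
  shows "Gcd (minors x y K) dvd l * Gcd (x ` K)"
proof -
  have "Gcd (minors x y K) dvd l * x q" if "q \<in> K" for q
  proof -
    have "(\<Sum>p\<in>K. y p * (x p * y q - x q * y p)) = y q * (\<Sum>p\<in>K. x p * y p) - x q * (\<Sum>p\<in>K. y p * y p)"
      by (simp add: algebra_simps sum_subtractf sum_distrib_left)
    then have "l * x q = - (\<Sum>p\<in>K. y p * (x p * y q - x q * y p))" using assms by simp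
    moreover have "Gcd (minors x y K) dvd (\<Sum>p\<in>K. y p * (x p * y q - x q * y p))"
      using that unfolding minors_def by (intro dvd_sum dvd_mult Gcd_dvd) auto
    ultimately show ?thesis by simp
  qed
  then show ?thesis by (auto simp: dvd_mult_Gcd_iff[symmetric] mult.commute)
qed

lemma dvd_Gcd_minors_if_ex_dvd_affine:
  fixes x y :: "'k \<Rightarrow> int"
  assumes "\<forall>k\<in>K. l dvd u * x k + v * y k"
  shows "l * Gcd (x ` K) dvd v * Gcd (minors x y K)"
proof -
  have "l * Gcd (x ` K) dvd v * (x p * y q - x q * y p)" if "p \<in> K" "q \<in> K" for p q
  proof -
    have "v * (x p * y q - x q * y p) = (u * x q + v * y q) * x p - (u * x p + v * y p) * x q"
      by (simp add: algebra_simps)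
    then show ?thesis using assms that by (simp add: dvd_diff mult_dvd_mono)
  qed
  then show ?thesis unfolding minors_def by (auto simp: dvd_mult_Gcd_iff[symmetric])
qed

lemma ex_dvd_affine_if_dvd_Gcd_minors:
  fixes x y :: "'k \<Rightarrow> int"
  assumes "finite K" "l > 0" and x_norm: "(\<Sum>k\<in>K. x k * x k) = l"
    and orth: "(\<Sum>k\<in>K. x k * y k) = 0"
    and dvd: "l * Gcd (x ` K) dvd v * Gcd (minors x y K)"
  shows "\<exists>u. \<forall>k\<in>K. l dvd u * x k + v * y k"
proof -
  txt \<open>With a Bezout combination sum_p s_p x_p = D, each D v y_q - X x_q is a combination of
    the v-multiples of the minors; pairing with x shows that D divides X, and u = -X/D works.\<close>
  define D where "D = Gcd (x ` K)"
  obtain s where s: "(\<Sum>p\<in>K. s p * x p) = D"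
    using Gcd_image_linear_combination[OF \<open>finite K\<close>] unfolding D_def by blast
  define X where "X = v * (\<Sum>p\<in>K. s p * y p)"
  have "D dvd l" using Gcd_dvd_sum_squares[of x K] x_norm unfolding D_def by simp
  with \<open>l > 0\<close> have "D \<noteq> 0" by auto
  have minor_dvd: "l * D dvd v * (x p * y q - x q * y p)" if "p \<in> K" "q \<in> K" for p q
    using dvd that unfolding minors_def D_def
    by (auto simp: dvd_mult_Gcd_iff[symmetric])
  have w_dvd: "l * D dvd D * v * y q - X * x q" if "q \<in> K" for q
  proof -
    have "D * v * y q - X * x q = (\<Sum>p\<in>K. s p * (v * (x p * y q - x q * y p)))"
      unfolding s[symmetric] X_def
      by (simp add: algebra_simps sum_subtractf sum_distrib_left sum_distrib_right)
    then show ?thesis using minor_dvd that by (simp add: dvd_sum)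
  qed
  have "(\<Sum>q\<in>K. x q * (D * v * y q - X * x q)) = D * v * (\<Sum>q\<in>K. x q * y q) - X * (\<Sum>q\<in>K. x q * x q)"
    by (simp add: algebra_simps sum_subtractf sum_distrib_left)
  also have "\<dots> = - (X * l)" using x_norm orth by simp
  finally have "l * D dvd X * l"
    using w_dvd dvd_sum[of K "l * D" "\<lambda>q. x q * (D * v * y q - X * x q)"] by (simp add: dvd_mult)
  then have "D dvd X" using \<open>l > 0\<close> by (simp add: mult.commute)
  then obtain u' where u': "X = D * u'" by (elim dvdE)
  have "l dvd - u' * x q + v * y q" if "q \<in> K" for q
  proof -
    have "l * D dvd (- u' * x q + v * y q) * D"
      using w_dvd[OF that] unfolding u' by (simp add: algebra_simps)
    then show ?thesis using \<open>D \<noteq> 0\<close> by simp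
  qed
  then show ?thesis by blast
qed

lemma ex_dvd_affine_iff:
  fixes x y :: "'k \<Rightarrow> int"
  assumes "finite K" "l > 0" and x_norm: "(\<Sum>k\<in>K. x k * x k) = l"
    and orth: "(\<Sum>k\<in>K. x k * y k) = 0"
  shows "(\<exists>u. \<forall>k\<in>K. l dvd u * x k + v * y k) \<longleftrightarrow> l * Gcd (x ` K) dvd v * Gcd (minors x y K)"
proof
  assume "\<exists>u. \<forall>k\<in>K. l dvd u * x k + v * y k"
  then show "l * Gcd (x ` K) dvd v * Gcd (minors x y K)"
    by (elim exE) (rule dvd_Gcd_minors_if_ex_dvd_affine)
next
  assume "l * Gcd (x ` K) dvd v * Gcd (minors x y K)"
  then show "\<exists>u. \<forall>k\<in>K. l dvd u * x k + v * y k"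
    by (rule ex_dvd_affine_if_dvd_Gcd_minors[OF assms])
qed

lemma Gcd_minors_factor:
  fixes x y :: "'k \<Rightarrow> int"
  assumes "l > 0"
    and x_norm: "(\<Sum>k\<in>K. x k * x k) = l" and y_norm: "(\<Sum>k\<in>K. y k * y k) = l"
    and orth: "(\<Sum>k\<in>K. x k * y k) = 0"
  obtains e q where "Gcd (minors x y K) = Gcd (x ` K) * e" and "l = e * q" and "e > 0" and "q > 0"
proof -
  define D where "D = Gcd (x ` K)"
  define Z where "Z = Gcd (minors x y K)"
  have "D dvd l" using Gcd_dvd_sum_squares[of x K] x_norm unfolding D_def by simp
  moreover have "D \<ge> 0" by (simp add: D_def)
  ultimately have "D > 0" using \<open>l > 0\<close> by (cases "D = 0") auto
  obtain e where e: "Z = D * e" using Gcd_dvd_Gcd_minors[of x K y] unfolding D_def Z_def by (elim dvdE)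
  have "Z dvd l * D" using Gcd_minors_dvd[OF y_norm, of x] orth unfolding Z_def D_def by (simp add: mult.commute)
  then have "e dvd l" using \<open>D > 0\<close> unfolding e by (simp add: mult.commute)
  then obtain q where q: "l = e * q" by (elim dvdE)
  have "Z \<ge> 0" by (simp add: Z_def)
  then have "e \<ge> 0" using \<open>D > 0\<close> unfolding e by (simp add: zero_le_mult_iff)
  moreover have "e \<noteq> 0" using q \<open>l > 0\<close> by auto
  ultimately have "e > 0" by simp
  moreover have "q > 0" using q \<open>l > 0\<close> \<open>e > 0\<close> by (simp add: zero_less_mult_iff)
  ultimately show ?thesis using that e q unfolding D_def Z_def by blast
qed

lemma sum_sum_of_bool_dvd_affine:
  fixes x y :: "'k \<Rightarrow> int"
  assumes "finite K" "l > 0"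
    and x_norm: "(\<Sum>k\<in>K. x k * x k) = l" and y_norm: "(\<Sum>k\<in>K. y k * y k) = l"
    and orth: "(\<Sum>k\<in>K. x k * y k) = 0"
  shows "(\<Sum>u\<in>{0..<l}. \<Sum>v\<in>{0..<l}. of_bool (\<forall>k\<in>K. l dvd u * x k + v * y k))
       = Gcd (minors x y K)"
proof -
  define D where "D = Gcd (x ` K)"
  obtain e q where e: "Gcd (minors x y K) = D * e" and q: "l = e * q" and "e > 0" "q > 0"
    using Gcd_minors_factor[OF \<open>l > 0\<close> x_norm y_norm orth] unfolding D_def by blast
  have "D dvd l" using Gcd_dvd_sum_squares[of x K] x_norm unfolding D_def by simp
  moreover have "D \<ge> 0" by (simp add: D_def)
  ultimately have "D > 0" using \<open>l > 0\<close> by (cases "D = 0") auto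
  have solvable_iff: "(\<exists>u. \<forall>k\<in>K. l dvd u * x k + v * y k) \<longleftrightarrow> q dvd v" for v
  proof -
    have "l * D dvd v * (D * e) \<longleftrightarrow> q dvd v"
      using \<open>D > 0\<close> \<open>e > 0\<close> unfolding q by (simp add: ac_simps)
    then show ?thesis
      using ex_dvd_affine_iff[OF assms(1,2) x_norm orth] unfolding D_def e by simp
  qed
  have column: "(\<Sum>u\<in>{0..<l}. of_bool (\<forall>k\<in>K. l dvd u * x k + v * y k)) = D * of_bool (q dvd v)" for v
  proof (cases "q dvd v")
    case True
    then obtain u0 where u0: "\<forall>k\<in>K. l dvd u0 * x k + v * y k" using solvable_iff by blast
    show ?thesis
      using True sum_of_bool_dvd_affine[OF \<open>l > 0\<close> \<open>D dvd l\<close>[unfolded D_def] u0]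
      unfolding D_def by simp
  next
    case False
    then show ?thesis using solvable_iff by auto
  qed
  have "(\<Sum>u\<in>{0..<l}. \<Sum>v\<in>{0..<l}. of_bool (\<forall>k\<in>K. l dvd u * x k + v * y k))
      = (\<Sum>v\<in>{0..<l}. \<Sum>u\<in>{0..<l}. of_bool (\<forall>k\<in>K. l dvd u * x k + v * y k))"
    by (rule sum.swap)
  also have "\<dots> = (\<Sum>v\<in>{0..<l}. D * of_bool (q dvd v))" by (simp only: column)
  also have "\<dots> = D * (\<Sum>v\<in>{0..<q * e}. of_bool (q dvd v))"
    by (simp only: sum_distrib_left q mult.commute)
  also have "\<dots> = D * e"
    using sum_of_bool_dvd_diff[of q e 0] \<open>q > 0\<close> \<open>e > 0\<close> by (simp only: diff_0_right)
  finally show ?thesis using e by simp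
qed

text \<open>The coordinates of r_i are indexed by 0..3.\<close>

definition row :: "(nat \<Rightarrow> int) \<Rightarrow> (nat \<Rightarrow> int) \<Rightarrow> (nat \<Rightarrow> int) \<Rightarrow> (nat \<Rightarrow> int) \<Rightarrow> nat \<Rightarrow> nat \<Rightarrow> int"
  where "row a b c d i = (!) [a i, b i, c i, d i]"

lemma lessThan_4: "{..<4::nat} = {0, 1, 2, 3}"
  by (auto simp: lessThan_nat_numeral)

lemma sum_row_mult:
  "(\<Sum>k<4. row a b c d i k * row a b c d j k) = a i * a j + b i * b j + c i * c j + d i * d j"
  by (simp add: row_def lessThan_4)

lemma Gcd_row: "Gcd (row a b c d i ` {..<4}) = Gcd {a i, b i, c i, d i}"
  by (simp add: row_def lessThan_4)

lemma Gcd_minors_row: "Gcd (minors (row a b c d i) (row a b c d j) {..<4}) = zeta a b c d i j"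
proof (rule Gcd_eqI)
  let ?M = "{a i * b j - b i * a j, a i * c j - c i * a j, a i * d j - d i * a j,
             b i * c j - c i * b j, b i * d j - d i * b j, c i * d j - d i * c j}"
  show "zeta a b c d i j dvd m" if "m \<in> minors (row a b c d i) (row a b c d j) {..<4}" for m
  proof -
    have "m \<in> ?M \<or> - m \<in> ?M \<or> m = 0"
      using that by (auto simp: minors_def row_def lessThan_4)
    then show ?thesis unfolding zeta_def by (metis Gcd_dvd dvd_minus_iff dvd_0_right)
  qed
  have minor_mem: "row a b c d i p * row a b c d j q - row a b c d i q * row a b c d j p
      \<in> minors (row a b c d i) (row a b c d j) {..<4}" if "p < 4" "q < 4" for p q
    using that by (auto simp: minors_def)
  show "n dvd zeta a b c d i j"
    if "\<And>m. m \<in> minors (row a b c d i) (row a b c d j) {..<4} \<Longrightarrow> n dvd m" for n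
    unfolding zeta_def
    using minor_mem[of 0 1] minor_mem[of 0 2] minor_mem[of 0 3] minor_mem[of 1 2]
      minor_mem[of 1 3] minor_mem[of 2 3]
    by (intro Gcd_greatest) (auto intro: that simp: row_def)
qed (simp add: zeta_def)

lemma orthogonal_expansion:
  fixes R :: "'i \<Rightarrow> 'a::euclidean_space"
  assumes card: "card I = DIM('a)" and "L > 0"
    and orth: "\<And>i j. i \<in> I \<Longrightarrow> j \<in> I \<Longrightarrow> inner (R i) (R j) = (if i = j then L else 0)"
  shows "z = (\<Sum>k\<in>I. (inner z (R k) / L) *\<^sub>R R k)"
proof (rule ccontr)
  define w where "w = z - (\<Sum>k\<in>I. (inner z (R k) / L) *\<^sub>R R k)"
  assume "z \<noteq> (\<Sum>k\<in>I. (inner z (R k) / L) *\<^sub>R R k)"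
  then have "w \<noteq> 0" by (simp add: w_def)
  have "finite I" using card by (intro card_ge_0_finite) simp
  have w_orth: "inner w (R j) = 0" if "j \<in> I" for j
  proof -
    have "(\<Sum>k\<in>I. (inner z (R k) / L) * inner (R k) (R j))
        = (\<Sum>k\<in>I. if k = j then inner z (R j) else 0)"
      using that orth \<open>L > 0\<close> by (intro sum.cong) auto
    also have "\<dots> = inner z (R j)" using that \<open>finite I\<close> by simp
    finally show ?thesis by (simp add: w_def inner_diff_left inner_sum_left)
  qed
  have "inj_on R I"
    using orth \<open>L > 0\<close> by (intro inj_onI) (metis less_irrefl)
  have "w \<notin> R ` I"
    using w_orth orth \<open>L > 0\<close> by force
  define S where "S = insert w (R ` I)"
  have "pairwise orthogonal S"
    using w_orth orth unfolding S_def pairwise_def orthogonal_def by (auto simp: inner_commute)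
  moreover have "0 \<notin> S"
    using \<open>w \<noteq> 0\<close> orth \<open>L > 0\<close> unfolding S_def by force
  ultimately have "card S \<le> DIM('a)"
    using independent_bound pairwise_orthogonal_independent by blast
  moreover have "card S = DIM('a) + 1"
    using \<open>w \<notin> R ` I\<close> \<open>inj_on R I\<close> \<open>finite I\<close> card unfolding S_def by (simp add: card_image)
  ultimately show False by simp
qed

definition inner_row :: "(nat \<Rightarrow> int) \<Rightarrow> (nat \<Rightarrow> int) \<Rightarrow> (nat \<Rightarrow> int) \<Rightarrow> (nat \<Rightarrow> int)
    \<Rightarrow> nat \<Rightarrow> int \<times> int \<times> int \<times> int \<Rightarrow> int" where
  "inner_row a b c d i = (\<lambda>(x, y, z, w). a i * x + b i * y + c i * z + d i * w)"

lemma lattice_point_expansion: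
  fixes a b c d :: "nat \<Rightarrow> int"
  assumes "l > 0"
    and orth: "\<forall>i\<in>{1..4}. \<forall>j\<in>{1..4}.
                 a i * a j + b i * b j + c i * c j + d i * d j = (if i = j then l else 0)"
    and p: "p = (x, y, z, w)"
  shows "l * x = (\<Sum>i=1..4. inner_row a b c d i p * a i)" and "l * y = (\<Sum>i=1..4. inner_row a b c d i p * b i)"
    and "l * z = (\<Sum>i=1..4. inner_row a b c d i p * c i)" and "l * w = (\<Sum>i=1..4. inner_row a b c d i p * d i)"
proof -
  define R where "R i = (real_of_int (a i), real_of_int (b i), real_of_int (c i), real_of_int (d i))" for i
  define Z where "Z = (real_of_int x, real_of_int y, real_of_int z, real_of_int w)"
  have "inner (R i) (R j) = (if i = j then real_of_int l else 0)" if "i \<in> {1..4}" "j \<in> {1..4}" for i j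
  proof -
    have "inner (R i) (R j) = real_of_int (a i * a j + b i * b j + c i * c j + d i * d j)"
      by (simp add: R_def)
    then show ?thesis by (simp only: orth[rule_format, OF that]) simp
  qed
  then have "Z = (\<Sum>k\<in>{1..4}. (inner Z (R k) / real_of_int l) *\<^sub>R R k)"
    using \<open>l > 0\<close> by (intro orthogonal_expansion) simp_all
  moreover have "inner Z (R k) = real_of_int (inner_row a b c d k p)" for k
    by (simp add: Z_def R_def p inner_row_def algebra_simps)
  ultimately have "real_of_int l *\<^sub>R Z = (\<Sum>k\<in>{1..4}. real_of_int (inner_row a b c d k p) *\<^sub>R R k)"
    using \<open>l > 0\<close> by (simp add: scaleR_sum_right)
  then show "l * x = (\<Sum>i=1..4. inner_row a b c d i p * a i)"
    and "l * y = (\<Sum>i=1..4. inner_row a b c d i p * b i)"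
    and "l * z = (\<Sum>i=1..4. inner_row a b c d i p * c i)"
    and "l * w = (\<Sum>i=1..4. inner_row a b c d i p * d i)"
    unfolding Z_def R_def by (simp_all add: prod_eq_iff fst_sum snd_sum flip: of_int_mult of_int_sum)
qed

lemma sum_1_4: "(\<Sum>i=(1::nat)..4. f i) = f 1 + f 2 + f 3 + (f 4 :: 'a::comm_monoid_add)"
  by (simp add: eval_nat_numeral add.assoc)

lemma sum_pairs_1_4:
  "(\<Sum>i=(1::nat)..4. \<Sum>j=i+1..4. f i j) = f 1 2 + f 1 3 + f 1 4 + f 2 3 + f 2 4 + (f 3 4 :: 'a::comm_monoid_add)"
  by (simp add: eval_nat_numeral ac_simps)

lemma inj_inner_rows:
  fixes a b c d :: "nat \<Rightarrow> int"
  assumes "l > 0"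
    and orth: "\<forall>i\<in>{1..4}. \<forall>j\<in>{1..4}.
                 a i * a j + b i * b j + c i * c j + d i * d j = (if i = j then l else 0)"
  shows "inj (\<lambda>p. (inner_row a b c d 1 p, inner_row a b c d 2 p, inner_row a b c d 3 p, inner_row a b c d 4 p))"
proof (rule injI)
  fix p q
  assume "(inner_row a b c d 1 p, inner_row a b c d 2 p, inner_row a b c d 3 p, inner_row a b c d 4 p)
        = (inner_row a b c d 1 q, inner_row a b c d 2 q, inner_row a b c d 3 q, inner_row a b c d 4 q)"
  then have "inner_row a b c d i p = inner_row a b c d i q" if "i \<in> {1..4}" for i
    using that by (auto simp: atLeastAtMost_iff numeral_eq_Suc le_Suc_eq)
  then have same: "(\<Sum>i=1..4. inner_row a b c d i p * f i) = (\<Sum>i=1..4. inner_row a b c d i q * f i)" for f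
    by (intro sum.cong) auto
  obtain x y z w x' y' z' w' where p: "p = (x, y, z, w)" and q: "q = (x', y', z', w')"
    by (cases p, cases q)
  have "l * x = l * x'" "l * y = l * y'" "l * z = l * z'" "l * w = l * w'"
    using lattice_point_expansion[OF \<open>l > 0\<close> orth p] lattice_point_expansion[OF \<open>l > 0\<close> orth q] same
    by metis+
  then show "p = q" using \<open>l > 0\<close> p q by simp
qed

lemma inner_row_par_H_point:
  fixes a b c d :: "nat \<Rightarrow> int" and s :: "nat \<Rightarrow> real"
  assumes orth: "\<forall>i\<in>{1..4}. \<forall>j\<in>{1..4}.
                 a i * a j + b i * b j + c i * c j + d i * d j = (if i = j then l else 0)"
    and "k \<in> {1..4}"
  shows "a k * (\<Sum>i=1..4. s i * a i) + b k * (\<Sum>i=1..4. s i * b i)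
       + c k * (\<Sum>i=1..4. s i * c i) + d k * (\<Sum>i=1..4. s i * d i) = s k * l"
proof -
  have "a k * (\<Sum>i=1..4. s i * a i) + b k * (\<Sum>i=1..4. s i * b i)
       + c k * (\<Sum>i=1..4. s i * c i) + d k * (\<Sum>i=1..4. s i * d i)
      = (\<Sum>i=1..4. s i * of_int (a k * a i + b k * b i + c k * c i + d k * d i))"
    by (simp add: sum_distrib_left sum.distrib algebra_simps)
  also have "\<dots> = (\<Sum>i=1..4. if i = k then s k * l else 0)"
    using orth \<open>k \<in> {1..4}\<close> by (intro sum.cong) auto
  also have "\<dots> = s k * l" using \<open>k \<in> {1..4}\<close> by simp
  finally show ?thesis .
qed

lemma inner_row_bounds_if_in_dilated_par_H:
  fixes a b c d :: "nat \<Rightarrow> int"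
  assumes "l > 0"
    and orth: "\<forall>i\<in>{1..4}. \<forall>j\<in>{1..4}.
                 a i * a j + b i * b j + c i * c j + d i * d j = (if i = j then l else 0)"
    and "(real_of_int x, real_of_int y, real_of_int z, real_of_int w)
           \<in> (\<lambda>(p, q, u, v). (real t * p, real t * q, real t * u, real t * v)) ` par_H a b c d"
    and "k \<in> {1..4}"
  shows "0 \<le> inner_row a b c d k (x, y, z, w) \<and> inner_row a b c d k (x, y, z, w) \<le> int t * l"
proof -
  obtain s where s: "\<forall>i\<in>{1..4::nat}. 0 \<le> s i \<and> s i \<le> (1::real)"
    and "real_of_int x = real t * (\<Sum>i=1..4. s i * a i)" "real_of_int y = real t * (\<Sum>i=1..4. s i * b i)"
        "real_of_int z = real t * (\<Sum>i=1..4. s i * c i)" "real_of_int w = real t * (\<Sum>i=1..4. s i * d i)"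
    using assms(3) unfolding par_H_def by auto
  then have coordinate: "real_of_int (inner_row a b c d k (x, y, z, w)) = real t * (s k * l)"
    using inner_row_par_H_point[OF orth \<open>k \<in> {1..4}\<close>, of s, symmetric]
    by (simp add: inner_row_def algebra_simps)
  have "s k * l \<le> 1 * real_of_int l" using s \<open>k \<in> {1..4}\<close> \<open>l > 0\<close> by (intro mult_right_mono) auto
  then have "real t * (s k * l) \<le> real t * (1 * real_of_int l)" by (intro mult_left_mono) auto
  moreover have "0 \<le> real t * (s k * l)" using s \<open>k \<in> {1..4}\<close> \<open>l > 0\<close> by simp
  ultimately have "real_of_int 0 \<le> real_of_int (inner_row a b c d k (x, y, z, w))
      \<and> real_of_int (inner_row a b c d k (x, y, z, w)) \<le> real_of_int (int t * l)"
    using coordinate by simp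
  then show ?thesis by (simp only: of_int_le_iff)
qed

lemma in_dilated_par_H_if_inner_row_bounds:
  fixes a b c d :: "nat \<Rightarrow> int"
  assumes "l > 0" and "t > 0"
    and orth: "\<forall>i\<in>{1..4}. \<forall>j\<in>{1..4}.
                 a i * a j + b i * b j + c i * c j + d i * d j = (if i = j then l else 0)"
    and bounds: "\<forall>i\<in>{1..4}. 0 \<le> inner_row a b c d i (x, y, z, w) \<and> inner_row a b c d i (x, y, z, w) \<le> int t * l"
  shows "(real_of_int x, real_of_int y, real_of_int z, real_of_int w)
           \<in> (\<lambda>(p, q, u, v). (real t * p, real t * q, real t * u, real t * v)) ` par_H a b c d"
proof -
  define s where "s i = real_of_int (inner_row a b c d i (x, y, z, w)) / (real t * real_of_int l)" for i
  have s_bounds: "\<forall>i\<in>{1..4::nat}. 0 \<le> s i \<and> s i \<le> 1"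
  proof
    fix i :: nat assume "i \<in> {1..4}"
    then have "real_of_int 0 \<le> real_of_int (inner_row a b c d i (x, y, z, w))"
      "real_of_int (inner_row a b c d i (x, y, z, w)) \<le> real_of_int (int t * l)"
      using bounds by (simp_all only: of_int_le_iff)
    then show "0 \<le> s i \<and> s i \<le> 1"
      using \<open>l > 0\<close> \<open>t > 0\<close> unfolding s_def by (simp add: divide_le_eq_1)
  qed
  have coordinate: "real t * (\<Sum>i=1..4. s i * f i) = real_of_int v"
    if "l * v = (\<Sum>i=1..4. inner_row a b c d i (x, y, z, w) * f i)" for f v
  proof -
    have "real t * (\<Sum>i=1..4. s i * f i)
        = real_of_int (\<Sum>i=1..4. inner_row a b c d i (x, y, z, w) * f i) / real_of_int l"
      using \<open>t > 0\<close> unfolding s_def by (simp add: sum_divide_distrib[symmetric])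
    also have "\<dots> = real_of_int (l * v) / real_of_int l" by (simp only: that)
    finally show ?thesis using \<open>l > 0\<close> by simp
  qed
  note expansion = lattice_point_expansion[OF \<open>l > 0\<close> orth refl]
  have "(real_of_int x, real_of_int y, real_of_int z, real_of_int w)
      = (\<lambda>(p, q, u, v). (real t * p, real t * q, real t * u, real t * v))
          (\<Sum>i=1..4. s i * a i, \<Sum>i=1..4. s i * b i, \<Sum>i=1..4. s i * c i, \<Sum>i=1..4. s i * d i)"
    using coordinate[OF expansion(1)] coordinate[OF expansion(2)]
      coordinate[OF expansion(3)] coordinate[OF expansion(4)] by simp
  moreover have "(\<Sum>i=1..4. s i * a i, \<Sum>i=1..4. s i * b i, \<Sum>i=1..4. s i * c i, \<Sum>i=1..4. s i * d i)
      \<in> par_H a b c d"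
    unfolding par_H_def using s_bounds by blast
  ultimately show ?thesis by (rule image_eqI)
qed

lemma lattice_count_eq_card_inner_row_bounds:
  fixes a b c d :: "nat \<Rightarrow> int"
  assumes "l > 0" and "t > 0"
    and orth: "\<forall>i\<in>{1..4}. \<forall>j\<in>{1..4}.
                 a i * a j + b i * b j + c i * c j + d i * d j = (if i = j then l else 0)"
  shows "lattice_count a b c d t
      = card {p. \<forall>i\<in>{1..4}. 0 \<le> inner_row a b c d i p \<and> inner_row a b c d i p \<le> int t * l}"
proof -
  have "{(x, y, z, w). (real_of_int x, real_of_int y, real_of_int z, real_of_int w)
      \<in> (\<lambda>(p, q, u, v). (real t * p, real t * q, real t * u, real t * v)) ` par_H a b c d}
      = {p. \<forall>i\<in>{1..4}. 0 \<le> inner_row a b c d i p \<and> inner_row a b c d i p \<le> int t * l}"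
  proof (intro set_eqI)
    fix p :: "int \<times> int \<times> int \<times> int"
    obtain x y z w where p: "p = (x, y, z, w)" by (cases p)
    have "(real_of_int x, real_of_int y, real_of_int z, real_of_int w)
        \<in> (\<lambda>(p, q, u, v). (real t * p, real t * q, real t * u, real t * v)) ` par_H a b c d
      \<longleftrightarrow> (\<forall>i\<in>{1..4}. 0 \<le> inner_row a b c d i p \<and> inner_row a b c d i p \<le> int t * l)"
      unfolding p
      using inner_row_bounds_if_in_dilated_par_H[OF \<open>l > 0\<close> orth, where x=x and y=y and z=z and w=w]
        in_dilated_par_H_if_inner_row_bounds[OF \<open>l > 0\<close> \<open>t > 0\<close> orth, where x=x and y=y and z=z and w=w]
      by blast
    then show "p \<in> {(x, y, z, w). (real_of_int x, real_of_int y, real_of_int z, real_of_int w)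
        \<in> (\<lambda>(p, q, u, v). (real t * p, real t * q, real t * u, real t * v)) ` par_H a b c d}
      \<longleftrightarrow> p \<in> {p. \<forall>i\<in>{1..4}. 0 \<le> inner_row a b c d i p \<and> inner_row a b c d i p \<le> int t * l}"
      unfolding p by simp
  qed
  then show ?thesis by (simp add: lattice_count_def)
qed

lemma all_row_dvd_iff:
  "(\<forall>k\<in>{..<4}. l dvd y1 * row a b c d 1 k + y2 * row a b c d 2 k + y3 * row a b c d 3 k + y4 * row a b c d 4 k)
   \<longleftrightarrow> l dvd y1 * a 1 + y2 * a 2 + y3 * a 3 + y4 * a 4 \<and> l dvd y1 * b 1 + y2 * b 2 + y3 * b 3 + y4 * b 4
     \<and> l dvd y1 * c 1 + y2 * c 2 + y3 * c 3 + y4 * c 4 \<and> l dvd y1 * d 1 + y2 * d 2 + y3 * d 3 + y4 * d 4"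
  by (simp add: row_def lessThan_4)

lemma inner_rows_of_multiple:
  fixes a b c d :: "nat \<Rightarrow> int"
  assumes "l > 0"
    and orth: "\<forall>i\<in>{1..4}. \<forall>j\<in>{1..4}.
                 a i * a j + b i * b j + c i * c j + d i * d j = (if i = j then l else 0)"
    and multiples:
      "y1 * a 1 + y2 * a 2 + y3 * a 3 + y4 * a 4 = l * x" "y1 * b 1 + y2 * b 2 + y3 * b 3 + y4 * b 4 = l * y"
      "y1 * c 1 + y2 * c 2 + y3 * c 3 + y4 * c 4 = l * z" "y1 * d 1 + y2 * d 2 + y3 * d 3 + y4 * d 4 = l * w"
  shows "(inner_row a b c d 1 (x, y, z, w), inner_row a b c d 2 (x, y, z, w),
          inner_row a b c d 3 (x, y, z, w), inner_row a b c d 4 (x, y, z, w)) = (y1, y2, y3, y4)"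
proof -
  have orth_ij: "a i * a j + b i * b j + c i * c j + d i * d j = (if i = j then l else 0)"
    if "i \<in> {1..4}" "j \<in> {1..4}" for i j
    using orth that by blast
  have lP: "l * inner_row a b c d j (x, y, z, w) = y1 * (a j * a 1 + b j * b 1 + c j * c 1 + d j * d 1)
      + y2 * (a j * a 2 + b j * b 2 + c j * c 2 + d j * d 2) + y3 * (a j * a 3 + b j * b 3 + c j * c 3 + d j * d 3)
      + y4 * (a j * a 4 + b j * b 4 + c j * c 4 + d j * d 4)" for j
  proof -
    have "l * inner_row a b c d j (x, y, z, w) = a j * (l * x) + b j * (l * y) + c j * (l * z) + d j * (l * w)"
      by (simp add: inner_row_def algebra_simps)
    also have "\<dots> = a j * (y1 * a 1 + y2 * a 2 + y3 * a 3 + y4 * a 4) + b j * (y1 * b 1 + y2 * b 2 + y3 * b 3 + y4 * b 4)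
        + c j * (y1 * c 1 + y2 * c 2 + y3 * c 3 + y4 * c 4) + d j * (y1 * d 1 + y2 * d 2 + y3 * d 3 + y4 * d 4)"
      by (simp only: multiples)
    finally show ?thesis by (simp add: algebra_simps)
  qed
  show ?thesis
    using lP[of 1] lP[of 2] lP[of 3] lP[of 4] orth_ij \<open>l > 0\<close> by simp
qed

lemma image_inner_rows:
  fixes a b c d :: "nat \<Rightarrow> int"
  assumes "l > 0"
    and orth: "\<forall>i\<in>{1..4}. \<forall>j\<in>{1..4}.
                 a i * a j + b i * b j + c i * c j + d i * d j = (if i = j then l else 0)"
  shows "(\<lambda>p. (inner_row a b c d 1 p, inner_row a b c d 2 p, inner_row a b c d 3 p, inner_row a b c d 4 p))
           ` {p. \<forall>i\<in>{1..4}. 0 \<le> inner_row a b c d i p \<and> inner_row a b c d i p \<le> int t * l}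
       = {(y1, y2, y3, y4). {y1, y2, y3, y4} \<subseteq> {0..int t * l} \<and>
           (\<forall>k\<in>{..<4}. l dvd y1 * row a b c d 1 k + y2 * row a b c d 2 k
                         + y3 * row a b c d 3 k + y4 * row a b c d 4 k)}"
    (is "?\<phi> ` ?S = ?B")
proof (intro set_eqI iffI)
  fix y assume "y \<in> ?\<phi> ` ?S"
  then obtain p where "p \<in> ?S" "y = ?\<phi> p" by blast
  obtain x1 x2 x3 x4 where p: "p = (x1, x2, x3, x4)" by (cases p)
  note expansion = lattice_point_expansion[OF \<open>l > 0\<close> orth p, unfolded sum_1_4]
  have "inner_row a b c d i p \<in> {0..int t * l}" if "i \<in> {1..4}" for i
    using \<open>p \<in> ?S\<close> that by auto
  moreover have "l dvd inner_row a b c d 1 p * a 1 + inner_row a b c d 2 p * a 2 + inner_row a b c d 3 p * a 3 + inner_row a b c d 4 p * a 4"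
    "l dvd inner_row a b c d 1 p * b 1 + inner_row a b c d 2 p * b 2 + inner_row a b c d 3 p * b 3 + inner_row a b c d 4 p * b 4"
    "l dvd inner_row a b c d 1 p * c 1 + inner_row a b c d 2 p * c 2 + inner_row a b c d 3 p * c 3 + inner_row a b c d 4 p * c 4"
    "l dvd inner_row a b c d 1 p * d 1 + inner_row a b c d 2 p * d 2 + inner_row a b c d 3 p * d 3 + inner_row a b c d 4 p * d 4"
    by (simp_all only: expansion[symmetric] dvd_triv_left)
  ultimately show "y \<in> ?B"
    unfolding \<open>y = ?\<phi> p\<close> all_row_dvd_iff by simp
next
  fix y assume "y \<in> ?B"
  then obtain y1 y2 y3 y4 where y: "y = (y1, y2, y3, y4)" "{y1, y2, y3, y4} \<subseteq> {0..int t * l}"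
    and "l dvd y1 * a 1 + y2 * a 2 + y3 * a 3 + y4 * a 4" "l dvd y1 * b 1 + y2 * b 2 + y3 * b 3 + y4 * b 4"
        "l dvd y1 * c 1 + y2 * c 2 + y3 * c 3 + y4 * c 4" "l dvd y1 * d 1 + y2 * d 2 + y3 * d 3 + y4 * d 4"
    unfolding all_row_dvd_iff by blast
  then obtain x' y' z' w' where
    "y1 * a 1 + y2 * a 2 + y3 * a 3 + y4 * a 4 = l * x'" "y1 * b 1 + y2 * b 2 + y3 * b 3 + y4 * b 4 = l * y'"
    "y1 * c 1 + y2 * c 2 + y3 * c 3 + y4 * c 4 = l * z'" "y1 * d 1 + y2 * d 2 + y3 * d 3 + y4 * d 4 = l * w'"
    by (metis dvdE)
  from inner_rows_of_multiple[OF \<open>l > 0\<close> orth this]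
  have "y = ?\<phi> (x', y', z', w')" and "(x', y', z', w') \<in> ?S"
    using y by (auto simp: atLeastAtMost_iff numeral_eq_Suc le_Suc_eq)
  then show "y \<in> ?\<phi> ` ?S" by blast
qed

lemma lattice_count_eq_card:
  fixes a b c d :: "nat \<Rightarrow> int"
  assumes "l > 0" and "t > 0"
    and orth: "\<forall>i\<in>{1..4}. \<forall>j\<in>{1..4}.
                 a i * a j + b i * b j + c i * c j + d i * d j = (if i = j then l else 0)"
  shows "lattice_count a b c d t = card {(y1, y2, y3, y4). {y1, y2, y3, y4} \<subseteq> {0..int t * l} \<and>
           (\<forall>k\<in>{..<4}. l dvd y1 * row a b c d 1 k + y2 * row a b c d 2 k
                         + y3 * row a b c d 3 k + y4 * row a b c d 4 k)}"
  unfolding lattice_count_eq_card_inner_row_bounds[OF assms] image_inner_rows[OF \<open>l > 0\<close> orth, symmetric]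
  using inj_inner_rows[OF \<open>l > 0\<close> orth] by (simp add: card_image inj_on_subset)

lemma sum_of_bool_dvd_row:
  fixes a b c d :: "nat \<Rightarrow> int"
  assumes "l > 0" and "i \<in> {1..4}"
    and orth: "\<forall>i\<in>{1..4}. \<forall>j\<in>{1..4}.
                 a i * a j + b i * b j + c i * c j + d i * d j = (if i = j then l else 0)"
  shows "(\<Sum>u\<in>{0..<l}. of_bool (\<forall>k\<in>{..<4}. l dvd u * row a b c d i k)) = Gcd {a i, b i, c i, d i}"
proof -
  have "(\<Sum>k<4. row a b c d i k * row a b c d i k) = l"
    using orth \<open>i \<in> {1..4}\<close> by (simp only: sum_row_mult) simp
  from sum_of_bool_dvd_mult[OF \<open>l > 0\<close> this] show ?thesis by (simp add: Gcd_row)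
qed

lemma sum_of_bool_dvd_rows:
  fixes a b c d :: "nat \<Rightarrow> int"
  assumes "l > 0" and "i \<in> {1..4}" "j \<in> {1..4}" "i \<noteq> j"
    and orth: "\<forall>i\<in>{1..4}. \<forall>j\<in>{1..4}.
                 a i * a j + b i * b j + c i * c j + d i * d j = (if i = j then l else 0)"
  shows "(\<Sum>u\<in>{0..<l}. \<Sum>v\<in>{0..<l}. of_bool (\<forall>k\<in>{..<4}. l dvd u * row a b c d i k + v * row a b c d j k))
       = zeta a b c d i j"
proof -
  have "(\<Sum>k<4. row a b c d i k * row a b c d i k) = l" "(\<Sum>k<4. row a b c d j k * row a b c d j k) = l"
    "(\<Sum>k<4. row a b c d i k * row a b c d j k) = 0"
    using orth assms(2-4) by (simp_all only: sum_row_mult) simp_all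
  from sum_sum_of_bool_dvd_affine[OF _ \<open>l > 0\<close> this] show ?thesis by (simp add: Gcd_minors_row)
qed

lemma int_card_tuples_eq_sum:
  assumes "finite I"
  shows "int (card {(y1, y2, y3, y4). {y1, y2, y3, y4} \<subseteq> I \<and> P y1 y2 y3 y4})
       = (\<Sum>y1\<in>I. \<Sum>y2\<in>I. \<Sum>y3\<in>I. \<Sum>y4\<in>I. of_bool (P y1 y2 y3 y4))"
proof -
  define Q where "Q = (\<lambda>(y1, y2, y3, y4). P y1 y2 y3 y4)"
  have "{(y1, y2, y3, y4). {y1, y2, y3, y4} \<subseteq> I \<and> P y1 y2 y3 y4} = {y \<in> I \<times> I \<times> I \<times> I. Q y}"
    by (auto simp: Q_def)
  then have "int (card {(y1, y2, y3, y4). {y1, y2, y3, y4} \<subseteq> I \<and> P y1 y2 y3 y4})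
      = (\<Sum>y\<in>{y \<in> I \<times> I \<times> I \<times> I. Q y}. 1)" by simp
  also have "\<dots> = (\<Sum>y\<in>I \<times> I \<times> I \<times> I. of_bool (Q y))"
    using assms by (simp only: sum.inter_filter finite_cartesian_product) (simp add: of_bool_def)
  also have "\<dots> = (\<Sum>y1\<in>I. \<Sum>y2\<in>I. \<Sum>y3\<in>I. \<Sum>y4\<in>I. of_bool (P y1 y2 y3 y4))"
    by (simp add: sum.cartesian_product Q_def split_def)
  finally show ?thesis .
qed

lemma quartic_eq_zero_at_1_to_5:
  fixes c0 c1 c2 c3 c4 :: real
  assumes "\<And>t::nat. t \<in> {1..5} \<Longrightarrow> c4 * t ^ 4 + c3 * t ^ 3 + c2 * t ^ 2 + c1 * t + c0 = 0"
  shows "c0 = 0" "c1 = 0" "c2 = 0" "c3 = 0" "c4 = 0"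
proof -
  have "c4 + c3 + c2 + c1 + c0 = 0" "16 * c4 + 8 * c3 + 4 * c2 + 2 * c1 + c0 = 0"
    "81 * c4 + 27 * c3 + 9 * c2 + 3 * c1 + c0 = 0" "256 * c4 + 64 * c3 + 16 * c2 + 4 * c1 + c0 = 0"
    "625 * c4 + 125 * c3 + 25 * c2 + 5 * c1 + c0 = 0"
    using assms[of 1] assms[of 2] assms[of 3] assms[of 4] assms[of 5] by simp_all
  then show "c0 = 0" "c1 = 0" "c2 = 0" "c3 = 0" "c4 = 0" by linarith+
qed

lemma sum_cube_periodic:
  fixes G :: "int \<Rightarrow> int \<Rightarrow> int \<Rightarrow> int \<Rightarrow> int"
  assumes "l > 0"
    and "\<And>y1 y2 y3 y4. G (y1 + l) y2 y3 y4 = G y1 y2 y3 y4"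
    and "\<And>y1 y2 y3 y4. G y1 (y2 + l) y3 y4 = G y1 y2 y3 y4"
    and "\<And>y1 y2 y3 y4. G y1 y2 (y3 + l) y4 = G y1 y2 y3 y4"
    and "\<And>y1 y2 y3 y4. G y1 y2 y3 (y4 + l) = G y1 y2 y3 y4"
  shows "(\<Sum>y1\<in>{0..int t * l}. \<Sum>y2\<in>{0..int t * l}. \<Sum>y3\<in>{0..int t * l}. \<Sum>y4\<in>{0..int t * l}. G y1 y2 y3 y4)
    = int t ^ 4 * (\<Sum>y1\<in>{0..<l}. \<Sum>y2\<in>{0..<l}. \<Sum>y3\<in>{0..<l}. \<Sum>y4\<in>{0..<l}. G y1 y2 y3 y4)
    + int t ^ 3 * ((\<Sum>y1\<in>{0..<l}. \<Sum>y2\<in>{0..<l}. \<Sum>y3\<in>{0..<l}. G y1 y2 y3 0)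
               + (\<Sum>y1\<in>{0..<l}. \<Sum>y2\<in>{0..<l}. \<Sum>y4\<in>{0..<l}. G y1 y2 0 y4)
               + (\<Sum>y1\<in>{0..<l}. \<Sum>y3\<in>{0..<l}. \<Sum>y4\<in>{0..<l}. G y1 0 y3 y4)
               + (\<Sum>y2\<in>{0..<l}. \<Sum>y3\<in>{0..<l}. \<Sum>y4\<in>{0..<l}. G 0 y2 y3 y4))
    + int t ^ 2 * ((\<Sum>y1\<in>{0..<l}. \<Sum>y2\<in>{0..<l}. G y1 y2 0 0)
               + (\<Sum>y1\<in>{0..<l}. \<Sum>y3\<in>{0..<l}. G y1 0 y3 0)
               + (\<Sum>y1\<in>{0..<l}. \<Sum>y4\<in>{0..<l}. G y1 0 0 y4)
               + (\<Sum>y2\<in>{0..<l}. \<Sum>y3\<in>{0..<l}. G 0 y2 y3 0)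
               + (\<Sum>y2\<in>{0..<l}. \<Sum>y4\<in>{0..<l}. G 0 y2 0 y4)
               + (\<Sum>y3\<in>{0..<l}. \<Sum>y4\<in>{0..<l}. G 0 0 y3 y4))
    + int t * ((\<Sum>y1\<in>{0..<l}. G y1 0 0 0) + (\<Sum>y2\<in>{0..<l}. G 0 y2 0 0)
               + (\<Sum>y3\<in>{0..<l}. G 0 0 y3 0) + (\<Sum>y4\<in>{0..<l}. G 0 0 0 y4))
    + G 0 0 0 0"
proof -
  have "(\<Sum>u\<in>{0..int t * l}. g u) = int t * (\<Sum>u\<in>{0..<l}. g u) + g 0"
    if "\<And>u. g (u + l) = g u" for g :: "int \<Rightarrow> int"
    using sum_periodic_atLeastAtMost[of l g t] that \<open>l > 0\<close> by simp
  then show ?thesis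
    using assms(2-5) by (simp add: sum.distrib sum_distrib_left[symmetric] algebra_simps power_def)
qed

lemma dvd_linear_form_shift:
  fixes l y1 y2 y3 y4 p1 p2 p3 p4 :: int
  defines "L \<equiv> \<lambda>y1 y2 y3 y4. y1 * p1 + y2 * p2 + y3 * p3 + y4 * p4"
  shows "l dvd L (y1 + l) y2 y3 y4 \<longleftrightarrow> l dvd L y1 y2 y3 y4"
    and "l dvd L y1 (y2 + l) y3 y4 \<longleftrightarrow> l dvd L y1 y2 y3 y4"
    and "l dvd L y1 y2 (y3 + l) y4 \<longleftrightarrow> l dvd L y1 y2 y3 y4"
    and "l dvd L y1 y2 y3 (y4 + l) \<longleftrightarrow> l dvd L y1 y2 y3 y4"
proof -
  have "L (y1 + l) y2 y3 y4 = L y1 y2 y3 y4 + p1 * l" "L y1 (y2 + l) y3 y4 = L y1 y2 y3 y4 + p2 * l"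
    "L y1 y2 (y3 + l) y4 = L y1 y2 y3 y4 + p3 * l" "L y1 y2 y3 (y4 + l) = L y1 y2 y3 y4 + p4 * l"
    by (simp_all add: L_def algebra_simps)
  then show "l dvd L (y1 + l) y2 y3 y4 \<longleftrightarrow> l dvd L y1 y2 y3 y4"
    and "l dvd L y1 (y2 + l) y3 y4 \<longleftrightarrow> l dvd L y1 y2 y3 y4"
    and "l dvd L y1 y2 (y3 + l) y4 \<longleftrightarrow> l dvd L y1 y2 y3 y4"
    and "l dvd L y1 y2 y3 (y4 + l) \<longleftrightarrow> l dvd L y1 y2 y3 y4"
    by simp_all
qed

lemma lattice_count_polynomial:
  fixes a b c d :: "nat \<Rightarrow> int"
  assumes "l > 0"
    and orth: "\<forall>i\<in>{1..4}. \<forall>j\<in>{1..4}.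
                 a i * a j + b i * b j + c i * c j + d i * d j = (if i = j then l else 0)"
  obtains A4 A3 :: int where "\<And>t. t > 0 \<Longrightarrow> int (lattice_count a b c d t)
      = A4 * int t ^ 4 + A3 * int t ^ 3 + (\<Sum>i=1..4. \<Sum>j=i+1..4. zeta a b c d i j) * int t ^ 2
        + (\<Sum>i=1..4. Gcd {a i, b i, c i, d i}) * int t + 1"
proof -
  define G where "G y1 y2 y3 y4 = (of_bool (\<forall>k\<in>{..<4}. l dvd y1 * row a b c d 1 k + y2 * row a b c d 2 k
      + y3 * row a b c d 3 k + y4 * row a b c d 4 k) :: int)" for y1 y2 y3 y4
  have "G (y1 + l) y2 y3 y4 = G y1 y2 y3 y4" "G y1 (y2 + l) y3 y4 = G y1 y2 y3 y4"
    "G y1 y2 (y3 + l) y4 = G y1 y2 y3 y4" "G y1 y2 y3 (y4 + l) = G y1 y2 y3 y4" for y1 y2 y3 y4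
    unfolding G_def by (simp_all only: dvd_linear_form_shift)
  note expansion = sum_cube_periodic[where G = G, OF \<open>l > 0\<close> this]
  have count: "int (lattice_count a b c d t)
      = (\<Sum>y1\<in>{0..int t * l}. \<Sum>y2\<in>{0..int t * l}. \<Sum>y3\<in>{0..int t * l}. \<Sum>y4\<in>{0..int t * l}. G y1 y2 y3 y4)"
    if "t > 0" for t
    unfolding lattice_count_eq_card[OF \<open>l > 0\<close> that orth] G_def by (rule int_card_tuples_eq_sum) simp
  have linear: "(\<Sum>u\<in>{0..<l}. G u 0 0 0) + (\<Sum>u\<in>{0..<l}. G 0 u 0 0) + (\<Sum>u\<in>{0..<l}. G 0 0 u 0)
      + (\<Sum>u\<in>{0..<l}. G 0 0 0 u) = (\<Sum>i=1..4. Gcd {a i, b i, c i, d i})"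
    unfolding sum_1_4 G_def
    using sum_of_bool_dvd_row[OF \<open>l > 0\<close> _ orth, where i=1] sum_of_bool_dvd_row[OF \<open>l > 0\<close> _ orth, where i=2]
      sum_of_bool_dvd_row[OF \<open>l > 0\<close> _ orth, where i=3] sum_of_bool_dvd_row[OF \<open>l > 0\<close> _ orth, where i=4]
    by simp
  have quadratic: "(\<Sum>u\<in>{0..<l}. \<Sum>v\<in>{0..<l}. G u v 0 0) + (\<Sum>u\<in>{0..<l}. \<Sum>v\<in>{0..<l}. G u 0 v 0)
      + (\<Sum>u\<in>{0..<l}. \<Sum>v\<in>{0..<l}. G u 0 0 v) + (\<Sum>u\<in>{0..<l}. \<Sum>v\<in>{0..<l}. G 0 u v 0)
      + (\<Sum>u\<in>{0..<l}. \<Sum>v\<in>{0..<l}. G 0 u 0 v) + (\<Sum>u\<in>{0..<l}. \<Sum>v\<in>{0..<l}. G 0 0 u v)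
      = (\<Sum>i=1..4. \<Sum>j=i+1..4. zeta a b c d i j)"
    unfolding sum_pairs_1_4 G_def
    using sum_of_bool_dvd_rows[OF \<open>l > 0\<close> _ _ _ orth, where i=1 and j=2]
      sum_of_bool_dvd_rows[OF \<open>l > 0\<close> _ _ _ orth, where i=1 and j=3]
      sum_of_bool_dvd_rows[OF \<open>l > 0\<close> _ _ _ orth, where i=1 and j=4]
      sum_of_bool_dvd_rows[OF \<open>l > 0\<close> _ _ _ orth, where i=2 and j=3]
      sum_of_bool_dvd_rows[OF \<open>l > 0\<close> _ _ _ orth, where i=2 and j=4]
      sum_of_bool_dvd_rows[OF \<open>l > 0\<close> _ _ _ orth, where i=3 and j=4]
    by simp
  have constant_term: "G 0 0 0 0 = 1" by (simp add: G_def)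
  define A4 where "A4 = (\<Sum>y1\<in>{0..<l}. \<Sum>y2\<in>{0..<l}. \<Sum>y3\<in>{0..<l}. \<Sum>y4\<in>{0..<l}. G y1 y2 y3 y4)"
  define A3 where "A3 = (\<Sum>y1\<in>{0..<l}. \<Sum>y2\<in>{0..<l}. \<Sum>y3\<in>{0..<l}. G y1 y2 y3 0)
               + (\<Sum>y1\<in>{0..<l}. \<Sum>y2\<in>{0..<l}. \<Sum>y4\<in>{0..<l}. G y1 y2 0 y4)
               + (\<Sum>y1\<in>{0..<l}. \<Sum>y3\<in>{0..<l}. \<Sum>y4\<in>{0..<l}. G y1 0 y3 y4)
               + (\<Sum>y2\<in>{0..<l}. \<Sum>y3\<in>{0..<l}. \<Sum>y4\<in>{0..<l}. G 0 y2 y3 y4)"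
  show ?thesis
  proof (rule that[of A4 A3])
    fix t :: nat assume "t > 0"
    show "int (lattice_count a b c d t)
      = A4 * int t ^ 4 + A3 * int t ^ 3 + (\<Sum>i=1..4. \<Sum>j=i+1..4. zeta a b c d i j) * int t ^ 2
        + (\<Sum>i=1..4. Gcd {a i, b i, c i, d i}) * int t + 1"
      unfolding count[OF \<open>t > 0\<close>] expansion A4_def A3_def linear quadratic constant_term
      by (simp only: mult.commute)
  qed
qed

theorem theorem2p17:
  fixes a b c d :: "nat \<Rightarrow> int" and l :: int and \<alpha>1 \<alpha>2 \<alpha>3 :: real
  assumes l_pos: "l > 0"
    and orth: "\<forall>i\<in>{1..4}. \<forall>j\<in>{1..4}.
                 a i * a j + b i * b j + c i * c j + d i * d j = (if i = j then l else 0)"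
    and coprime: "Gcd ((\<lambda>i. Gcd {a i, b i, c i, d i}) ` {1..4}) = 1"
    and ehrhart: "\<forall>t::nat. t > 0 \<longrightarrow>
        real (lattice_count a b c d t)
          = real_of_int (l^2) * real t ^ 4 + \<alpha>1 * real t ^ 3 + \<alpha>2 * real t ^ 2 + \<alpha>3 * real t + 1"
  shows "\<alpha>2 = \<alpha>3 + real_of_int (\<Sum>i=1..4. \<Sum>j=i+1..4. zeta a b c d i j)
                   - real_of_int (\<Sum>i=1..4. Gcd {a i, b i, c i, d i})"
proof -
  define \<delta> where "\<delta> = real_of_int (\<Sum>i=1..4. \<Sum>j=i+1..4. zeta a b c d i j)"
  define \<Delta> where "\<Delta> = real_of_int (\<Sum>i=1..4. Gcd {a i, b i, c i, d i})"
  obtain A4 A3 :: int where count_int: "\<And>t. t > 0 \<Longrightarrow> int (lattice_count a b c d t)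
      = A4 * int t ^ 4 + A3 * int t ^ 3 + (\<Sum>i=1..4. \<Sum>j=i+1..4. zeta a b c d i j) * int t ^ 2
        + (\<Sum>i=1..4. Gcd {a i, b i, c i, d i}) * int t + 1"
    using lattice_count_polynomial[OF l_pos orth] by blast
  have count: "real (lattice_count a b c d t)
      = A4 * real t ^ 4 + A3 * real t ^ 3 + \<delta> * real t ^ 2 + \<Delta> * real t + 1" if "t > 0" for t
    using arg_cong[OF count_int[OF that], of real_of_int] unfolding \<delta>_def \<Delta>_def by simp
  have "(real_of_int (l^2) - A4) * real t ^ 4 + (\<alpha>1 - A3) * real t ^ 3 + (\<alpha>2 - \<delta>) * real t ^ 2
      + (\<alpha>3 - \<Delta>) * real t + 0 = 0" if "t \<in> {1..5}" for t
    using count[of t] ehrhart that by (simp add: algebra_simps)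
  from quartic_eq_zero_at_1_to_5[of "real_of_int (l^2) - A4" "\<alpha>1 - A3" "\<alpha>2 - \<delta>" "\<alpha>3 - \<Delta>" 0, OF this]
  have "\<alpha>2 - \<delta> = 0" "\<alpha>3 - \<Delta> = 0" by simp_all
  then show ?thesis unfolding \<delta>_def \<Delta>_def by simp
qed

end
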